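(* Let $\mathfrak B,\mathfrak D^+,\mathfrak D^-$ be Banach spaces and let $I^+\colon\mathfrak D^+\to\mathfrak B$, $I^-\colon\mathfrak B\to\mathfrak D^-$ be injective continuous linear embeddings with dense ranges. Let $T\colon\mathfrak D^+\to\mathfrak D^-$ be a bounded linear operator, and let $T^\bullet=(I^-)^{-1}T(I^+)^{-1}$ be the operator in $\mathfrak B$ with domain $\{x\in I^+(\mathfrak D^+)\;:\;T(I^+)^{-1}x\in I^-(\mathfrak B)\}$, acting by $T^\bullet x=(I^-)^{-1}T(I^+)^{-1}x$. Then every $\lambda\in\mathbb C$ for which $T-\lambda I^-I^+\colon\mathfrak D^+\to\mathfrak D^-$ has a bounded inverse belongs to the resolvent set of $T^\bullet$, and $$(T^\bullet-\lambda)^{-1}=I^+\,(T-\lambda I^-I^+)^{-1}I^-.$$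
   Context: "Has a bounded inverse" means: the operator is a bijection of $\mathfrak D^+$ onto $\mathfrak D^-$ with bounded inverse. *)

theory Defs
  imports "HOL-Analysis.Analysis"
begin

class scaleC =
  fixes scaleC :: "complex \<Rightarrow> 'a \<Rightarrow> 'a" (infixr \<open>*\<^sub>C\<close> 75)

class complex_vector = scaleC + real_vector +
  assumes scaleC_add_right: "a *\<^sub>C (x + y) = a *\<^sub>C x + a *\<^sub>C y"
    and scaleC_add_left: "(a + b) *\<^sub>C x = a *\<^sub>C x + b *\<^sub>C x"
    and scaleC_scaleC: "a *\<^sub>C (b *\<^sub>C x) = (a * b) *\<^sub>C x"
    and scaleC_one: "1 *\<^sub>C x = x"
    and scaleR_scaleC: "scaleR r x = (complex_of_real r) *\<^sub>C x"

class complex_normed_vector = complex_vector + real_normed_vector +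
  assumes norm_scaleC: "norm (a *\<^sub>C x) = cmod a * norm x"

class complex_banach = complex_normed_vector + banach

definition bounded_clinear :: "('a::complex_normed_vector \<Rightarrow> 'b::complex_normed_vector) \<Rightarrow> bool" where
  "bounded_clinear f \<longleftrightarrow> bounded_linear f \<and> (\<forall>c x. f (c *\<^sub>C x) = c *\<^sub>C f x)"

definition resolvent_set :: "'a::complex_banach set \<Rightarrow> ('a \<Rightarrow> 'a) \<Rightarrow> complex set" where
  "resolvent_set D A = {l. bij_betw (\<lambda>x. A x - l *\<^sub>C x) D UNIV \<and>
      bounded_clinear (the_inv_into D (\<lambda>x. A x - l *\<^sub>C x))}"

definition tdot_dom :: "('d \<Rightarrow> 'b) \<Rightarrow> ('b \<Rightarrow> 'e) \<Rightarrow> ('d \<Rightarrow> 'e) \<Rightarrow> 'b set" where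
  "tdot_dom Jp Jm T = {x \<in> range Jp. T (inv Jp x) \<in> range Jm}"

definition tdot :: "('d \<Rightarrow> 'b) \<Rightarrow> ('b \<Rightarrow> 'e) \<Rightarrow> ('d \<Rightarrow> 'e) \<Rightarrow> 'b \<Rightarrow> 'b" where
  "tdot Jp Jm T x = inv Jm (T (inv Jp x))"

end

theory Submission
  imports Defs
begin

text \<open>The statement is purely algebraic: writing \<open>S = T - \<lambda> I\<^sup>- I\<^sup>+\<close>, an element
  \<open>x = I\<^sup>+ d\<close> lies in the domain of \<open>T\<^sup>\<bullet>\<close> exactly when \<open>S d\<close> lies in the range of \<open>I\<^sup>-\<close>, and
  then \<open>I\<^sup>- ((T\<^sup>\<bullet> - \<lambda>) x) = S d\<close>. Hence \<open>I\<^sup>+ S\<^sup>-\<^sup>1 I\<^sup>-\<close> is a two-sided inverse of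
  \<open>T\<^sup>\<bullet> - \<lambda>\<close>, and it is bounded as a composition of bounded operators.\<close>

lemma bounded_clinear_compose:
  "bounded_clinear f \<Longrightarrow> bounded_clinear g \<Longrightarrow> bounded_clinear (\<lambda>x. f (g x))"
  unfolding bounded_clinear_def using bounded_linear_compose[of f g] by (auto simp: o_def)

lemma bounded_clinear_add: "bounded_clinear f \<Longrightarrow> f (a + b) = f a + f b"
  unfolding bounded_clinear_def using linear_add bounded_linear.linear by blast

lemma bounded_clinear_diff: "bounded_clinear f \<Longrightarrow> f (a - b) = f a - f b"
  unfolding bounded_clinear_def using linear_diff bounded_linear.linear by blast

lemma bounded_clinear_scaleC: "bounded_clinear f \<Longrightarrow> f (c *\<^sub>C a) = c *\<^sub>C f a"
  unfolding bounded_clinear_def by blast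

lemma bij_betw_UNIV_the_inv_into_eq:
  assumes left: "\<And>x. x \<in> D \<Longrightarrow> g (f x) = x"
    and right: "\<And>y. g y \<in> D \<and> f (g y) = y"
  shows "bij_betw f D UNIV" and "the_inv_into D f = g"
proof -
  show bij: "bij_betw f D UNIV"
    by (rule bij_betw_byWitness[where f' = g]) (use left right in auto)
  show "the_inv_into D f = g"
    using the_inv_into_f_eq[OF bij_betw_imp_inj_on[OF bij]] right by blast
qed

lemma Jm_tdot_shift_eq:
  assumes "inj Jp" "inj Jm" "bounded_clinear Jm" and "x \<in> tdot_dom Jp Jm T"
  shows "Jp (inv Jp x) = x"
    and "Jm (tdot Jp Jm T x - lam *\<^sub>C x) = T (inv Jp x) - lam *\<^sub>C Jm x"
proof -
  from \<open>x \<in> tdot_dom Jp Jm T\<close> obtain d b where x: "x = Jp d" and b: "T d = Jm b"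
    unfolding tdot_dom_def using \<open>inj Jp\<close> by auto
  then show "Jp (inv Jp x) = x"
    using \<open>inj Jp\<close> by simp
  have "tdot Jp Jm T x = b"
    using x b assms(1,2) by (simp add: tdot_def)
  then show "Jm (tdot Jp Jm T x - lam *\<^sub>C x) = T (inv Jp x) - lam *\<^sub>C Jm x"
    using x b assms(1) by (simp add: bounded_clinear_diff[OF assms(3)] bounded_clinear_scaleC[OF assms(3)])
qed

lemma tdot_shift_solution:
  assumes "inj Jp" "inj Jm" "bounded_clinear Jm"
    and S: "T d - lam *\<^sub>C Jm (Jp d) = Jm y"
  shows "Jp d \<in> tdot_dom Jp Jm T" and "tdot Jp Jm T (Jp d) - lam *\<^sub>C Jp d = y"
proof -
  have Td: "T d = Jm (y + lam *\<^sub>C Jp d)"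
    using S by (simp add: bounded_clinear_add[OF assms(3)] bounded_clinear_scaleC[OF assms(3)]
        algebra_simps)
  show "Jp d \<in> tdot_dom Jp Jm T"
    unfolding tdot_dom_def using Td \<open>inj Jp\<close> by auto
  show "tdot Jp Jm T (Jp d) - lam *\<^sub>C Jp d = y"
    unfolding tdot_def using Td assms(1,2) by simp
qed

theorem mainTheorem2:
  fixes Jp :: "'d::complex_banach \<Rightarrow> 'b::complex_banach"
    and Jm :: "'b \<Rightarrow> 'e::complex_banach"
    and T :: "'d \<Rightarrow> 'e"
    and lam :: complex
  assumes Ip_bd: "bounded_clinear Jp" and Ip_inj: "inj Jp" and Ip_dense: "closure (range Jp) = UNIV"
    and Im_bd: "bounded_clinear Jm" and Im_inj: "inj Jm" and Im_dense: "closure (range Jm) = UNIV"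
    and T_bd: "bounded_clinear T"
    and bij: "bij (\<lambda>x. T x - lam *\<^sub>C Jm (Jp x))"
    and inv_bd: "bounded_clinear (inv (\<lambda>x. T x - lam *\<^sub>C Jm (Jp x)))"
  shows "lam \<in> resolvent_set (tdot_dom Jp Jm T) (tdot Jp Jm T) \<and>
    (\<forall>y. the_inv_into (tdot_dom Jp Jm T) (\<lambda>x. tdot Jp Jm T x - lam *\<^sub>C x) y
         = Jp (inv (\<lambda>x. T x - lam *\<^sub>C Jm (Jp x)) (Jm y)))"
proof -
  define S where "S = (\<lambda>x. T x - lam *\<^sub>C Jm (Jp x))"
  define g where "g = (\<lambda>y. Jp (inv S (Jm y)))"
  have S_inv: "inv S (S d) = d" "S (inv S e) = e" for d e
    using inv_f_f[OF bij_is_inj[OF bij]] surj_f_inv_f[OF bij_is_surj[OF bij]]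
    unfolding S_def by simp_all
  have left: "g (tdot Jp Jm T x - lam *\<^sub>C x) = x" if "x \<in> tdot_dom Jp Jm T" for x
  proof -
    note shift = Jm_tdot_shift_eq[OF Ip_inj Im_inj Im_bd that]
    have "Jm (tdot Jp Jm T x - lam *\<^sub>C x) = S (inv Jp x)"
      unfolding S_def shift(1) by (rule shift(2))
    then show ?thesis
      unfolding g_def by (simp add: S_inv(1) shift(1))
  qed
  have right: "g y \<in> tdot_dom Jp Jm T \<and> tdot Jp Jm T (g y) - lam *\<^sub>C g y = y" for y
    using tdot_shift_solution[OF Ip_inj Im_inj Im_bd, of T "inv S (Jm y)" lam y] S_inv(2)
    unfolding g_def S_def by simp
  note resolvent = bij_betw_UNIV_the_inv_into_eq
    [of "tdot_dom Jp Jm T" g "\<lambda>x. tdot Jp Jm T x - lam *\<^sub>C x", OF left right]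
  have "bounded_clinear g"
    unfolding g_def S_def
    using bounded_clinear_compose[OF Ip_bd bounded_clinear_compose[OF inv_bd Im_bd]] .
  then show ?thesis
    using resolvent unfolding resolvent_set_def g_def S_def by simp
qed

end
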